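(* Fix one of the two variants $\sharp\in\{\text{lumped},\text{exact}\}$ described in the context, let $\vec X^m\in\underline V^h_{\partial_0}$ satisfy assumption $(\mathfrak A)$, and let $\Delta t_m>0$. (i) If $(\delta\vec X^{m+1},\kappa^{m+1})\in\underline V^h_\partial\times W_\sharp$ satisfies, with $\vec X^{m+1}=\vec X^m+\delta\vec X^{m+1}$, $$\Big(\vec X^m\cdot\vec e_1\,\tfrac{\vec X^{m+1}-\vec X^m}{\Delta t_m},\chi\,\vec\nu^m|\vec X^m_\rho|\Big)_\sharp=\Big(\vec X^m\cdot\vec e_1\,\kappa^{m+1},\chi|\vec X^m_\rho|\Big)_\sharp\quad\forall\chi\in W_\sharp,$$ $$\Big(\vec X^m\cdot\vec e_1\,\kappa^{m+1}\vec\nu^m,\vec\eta\,|\vec X^m_\rho|\Big)_\sharp+\big(\vec\eta\cdot\vec e_1,|\vec X^{m+1}_\rho|\big)+\Big((\vec X^m\cdot\vec e_1)\vec X^{m+1}_\rho,\vec\eta_\rho|\vec X^m_\rho|^{-1}\Big)=B^m(\vec\eta)\quad\forall\vec\eta\in\underline V^h_\partial,$$ then $E(\vec X^{m+1})+2\pi\Delta t_m\big(\vec X^m\cdot\vec e_1\,|\kappa^{m+1}|^2,|\vec X^m_\rho|\big)_\sharp\le E(\vec X^m)$. (ii) If $(\delta\vec X^{m+1},\vec\kappa^{m+1})\in\underline V^h_\partial\times[W_\sharp]^2$ satisfies, with $\vec X^{m+1}=\vec X^m+\delta\vec X^{m+1}$, $$\Big(\vec X^m\cdot\vec e_1\,\tfrac{\vec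 X^{m+1}-\vec X^m}{\Delta t_m},\vec\chi\,|\vec X^m_\rho|\Big)_\sharp=\Big((\vec X^m\cdot\vec e_1)\vec\kappa^{m+1},\vec\chi|\vec X^m_\rho|\Big)_\sharp\quad\forall\vec\chi\in[W_\sharp]^2,$$ $$\Big((\vec X^m\cdot\vec e_1)\vec\kappa^{m+1},\vec\eta\,|\vec X^m_\rho|\Big)_\sharp+\big(\vec\eta\cdot\vec e_1,|\vec X^{m+1}_\rho|\big)+\Big((\vec X^m\cdot\vec e_1)\vec X^{m+1}_\rho,\vec\eta_\rho|\vec X^m_\rho|^{-1}\Big)=B^m(\vec\eta)\quad\forall\vec\eta\in\underline V^h_\partial,$$ then $E(\vec X^{m+1})+2\pi\Delta t_m\big(\vec X^m\cdot\vec e_1\,|\vec\kappa^{m+1}|^2,|\vec X^m_\rho|\big)_\sharp\le E(\vec X^m)$.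
   Context: Setup. $\vec e_1=(1,0)^T$, $\vec e_2=(0,1)^T$; "$\cdot$" is the Euclidean inner product; $[r]_+=\max\{r,0\}$, $[r]_-=-\max\{-r,0\}$. $I$ is either the periodic interval $\mathbb R/\mathbb Z$ (with $\partial I=\emptyset$) or $I=(0,1)$ (with $\partial I=\{0,1\}$). $\partial I=\partial_DI\cup\partial_0I\cup\partial_1I\cup\partial_2I$ is a given disjoint partition, and $\widehat\varrho^{(p)}\in\mathbb R$, $p\in\{0,1\}$, are given constants with $|\widehat\varrho^{(p)}|\le1$. Let $J\ge3$, $h=1/J$, $q_j=jh$ ($j=0,\dots,J$; $q_0=q_J$ identified in the periodic case). $V^h$ is the space of continuous functions on $\overline I$ (periodic if $I=\mathbb R/\mathbb Z$) that are affine on each $[q_{j-1},q_j]$; $\underline V^h=[V^h]^2$; $\underline V^h_{\partial_0}=\{\vec\eta\in\underline V^h:\vec\eta(\rho)\cdot\vec e_1=0\ \forall\rho\in\partial_0I\}$; $\underline V^h_\partial=\{\vec\eta\in\underline V^h_{\partial_0}:\vec\eta(\rho)\cdot\vec e_i=0\ \forall\rho\in\partial_iI,\ i=1,2;\ \vec\eta(\rho)=\vec0\ \forall\rho\in\partial_DI\}$; $W^h_{\partial_0}=\{\chi\in V^h:\chi(\rho)=0\ \forall\rho\in\partial_0I\}$. $(\cdot,\cdot)$ is the $L^2(I)$ inner product (with dot product for vector functions), and for piecewise continuous $f,g$ the mass-lumped product is $(f,g)^h=\tfrac h2\sum_{j=1}^J[(fg)(q_j^-)+(fg)(q_{j-1}^+)]$.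 Two variants: in the "lumped" variant $(\cdot,\cdot)_\sharp=(\cdot,\cdot)^h$ and $W_\sharp=W^h_{\partial_0}$; in the "exact" variant $(\cdot,\cdot)_\sharp=(\cdot,\cdot)$ and $W_\sharp=V^h$. For $\vec X^m$ with $|\vec X^m_\rho|>0$ a.e., $\vec\nu^m=-[\vec X^m_\rho]^\perp/|\vec X^m_\rho|$ with $(a,b)^\perp=(b,-a)$. Assumption $(\mathfrak A)$: $|\vec X^m_\rho|>0$ a.e. on $I$ and $\vec X^m(\rho)\cdot\vec e_1>0$ for all $\rho\in\overline I\setminus\partial_0I$. The boundary functional is $B^m(\vec\eta)=-\sum_{p\in\partial_1I}\widehat\varrho^{(p)}(\vec X^m(p)\cdot\vec e_1)\vec\eta(p)\cdot\vec e_2-\sum_{p\in\partial_2I}\big(([\widehat\varrho^{(p)}]_+\vec X^{m+1}(p)+[\widehat\varrho^{(p)}]_-\vec X^m(p))\cdot\vec e_1\big)\vec\eta(p)\cdot\vec e_1$. The discrete energy of $\vec X\in\underline V^h$ is $E(\vec X)=2\pi(\vec X\cdot\vec e_1,|\vec X_\rho|)+2\pi\sum_{p\in\partial_1I}\widehat\varrho^{(p)}(\vec X(p)\cdot\vec e_1)(\vec X(p)\cdot\vec e_2)+\pi\sum_{p\in\partial_2I}\widehat\varrho^{(p)}(\vec X(p)\cdot\vec e_1)^2$. *)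

theory Defs
  imports "HOL-Analysis.Analysis"
begin

text \<open>Boundary condition types for the points of the boundary of I.
  BD = Dirichlet (part of partial_D I), B0 = partial_0 I, B1 = partial_1 I, B2 = partial_2 I.\<close>
datatype bctype = BD | B0 | B1 | B2

abbreviation e1 :: "real \<times> real" where "e1 \<equiv> (1, 0)"
abbreviation e2 :: "real \<times> real" where "e2 \<equiv> (0, 1)"

definition node :: "nat \<Rightarrow> nat \<Rightarrow> real" where
  "node J j = real j / real J"

text \<open>per = True: I is the periodic interval R/Z (boundary empty);
  per = False: I = (0,1) with boundary {0,1}.\<close>
definition bdry :: "bool \<Rightarrow> real set" where
  "bdry per = (if per then {} else {0, 1})"

definition bpart :: "bool \<Rightarrow> (real \<Rightarrow> bctype) \<Rightarrow> bctype \<Rightarrow> real set" where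
  "bpart per bc t = {p \<in> bdry per. bc p = t}"

text \<open>Continuous piecewise affine functions on [0,1] (periodic if per).
  At type real this is V^h, at type real*real it is [V^h]^2.\<close>
definition Vh :: "nat \<Rightarrow> bool \<Rightarrow> (real \<Rightarrow> 'a::real_normed_vector) set" where
  "Vh J per = {f. continuous_on {0..1} f
     \<and> (\<forall>j\<in>{1..J}. \<exists>a b. \<forall>\<rho>\<in>{node J (j - 1)..node J j}. f \<rho> = a + \<rho> *\<^sub>R b)
     \<and> (per \<longrightarrow> f 0 = f 1)}"

definition VVh0 :: "nat \<Rightarrow> bool \<Rightarrow> (real \<Rightarrow> bctype) \<Rightarrow> (real \<Rightarrow> real \<times> real) set" where
  "VVh0 J per bc = {\<eta> \<in> Vh J per. \<forall>\<rho>\<in>bpart per bc B0. \<eta> \<rho> \<bullet> e1 = 0}"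

definition VVhd :: "nat \<Rightarrow> bool \<Rightarrow> (real \<Rightarrow> bctype) \<Rightarrow> (real \<Rightarrow> real \<times> real) set" where
  "VVhd J per bc = {\<eta> \<in> VVh0 J per bc.
      (\<forall>\<rho>\<in>bpart per bc B1. \<eta> \<rho> \<bullet> e1 = 0)
    \<and> (\<forall>\<rho>\<in>bpart per bc B2. \<eta> \<rho> \<bullet> e2 = 0)
    \<and> (\<forall>\<rho>\<in>bpart per bc BD. \<eta> \<rho> = 0)}"

definition Wh0 :: "nat \<Rightarrow> bool \<Rightarrow> (real \<Rightarrow> bctype) \<Rightarrow> (real \<Rightarrow> real) set" where
  "Wh0 J per bc = {ch \<in> Vh J per. \<forall>\<rho>\<in>bpart per bc B0. ch \<rho> = 0}"

definition dr :: "(real \<Rightarrow> 'a::real_normed_vector) \<Rightarrow> real \<Rightarrow> 'a" where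
  "dr X \<rho> = vector_derivative X (at \<rho>)"

definition L2ip :: "(real \<Rightarrow> 'a::real_inner) \<Rightarrow> (real \<Rightarrow> 'a) \<Rightarrow> real" where
  "L2ip f g = integral {0..1} (\<lambda>\<rho>. f \<rho> \<bullet> g \<rho>)"

definition lumpip :: "nat \<Rightarrow> (real \<Rightarrow> 'a::real_inner) \<Rightarrow> (real \<Rightarrow> 'a) \<Rightarrow> real" where
  "lumpip J f g = (1 / real J) / 2 * (\<Sum>j = 1..J.
      Lim (at_left (node J j)) (\<lambda>\<rho>. f \<rho> \<bullet> g \<rho>)
    + Lim (at_right (node J (j - 1))) (\<lambda>\<rho>. f \<rho> \<bullet> g \<rho>))"

text \<open>The two variants: lumped = True gives ((.,.)^h, W^h_{partial_0}),
  lumped = False gives ((.,.), V^h).\<close>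
definition sip :: "bool \<Rightarrow> nat \<Rightarrow> (real \<Rightarrow> 'a::real_inner) \<Rightarrow> (real \<Rightarrow> 'a) \<Rightarrow> real" where
  "sip lumped J f g = (if lumped then lumpip J f g else L2ip f g)"

definition Wsh :: "bool \<Rightarrow> nat \<Rightarrow> bool \<Rightarrow> (real \<Rightarrow> bctype) \<Rightarrow> (real \<Rightarrow> real) set" where
  "Wsh lumped J per bc = (if lumped then Wh0 J per bc else Vh J per)"

definition W2 :: "(real \<Rightarrow> real) set \<Rightarrow> (real \<Rightarrow> real \<times> real) set" where
  "W2 W = {\<kappa>. (\<lambda>\<rho>. fst (\<kappa> \<rho>)) \<in> W \<and> (\<lambda>\<rho>. snd (\<kappa> \<rho>)) \<in> W}"

definition perp :: "real \<times> real \<Rightarrow> real \<times> real" where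
  "perp v = (snd v, - fst v)"

definition nu :: "(real \<Rightarrow> real \<times> real) \<Rightarrow> real \<Rightarrow> real \<times> real" where
  "nu X \<rho> = - ((1 / norm (dr X \<rho>)) *\<^sub>R perp (dr X \<rho>))"

definition posp :: "real \<Rightarrow> real" where "posp r = max r 0"
definition negp :: "real \<Rightarrow> real" where "negp r = - max (- r) 0"

definition Bm :: "bool \<Rightarrow> (real \<Rightarrow> bctype) \<Rightarrow> (real \<Rightarrow> real)
    \<Rightarrow> (real \<Rightarrow> real \<times> real) \<Rightarrow> (real \<Rightarrow> real \<times> real) \<Rightarrow> (real \<Rightarrow> real \<times> real) \<Rightarrow> real" where
  "Bm per bc rho Xm Xm1 \<eta> =
     - (\<Sum>p\<in>bpart per bc B1. rho p * (Xm p \<bullet> e1) * (\<eta> p \<bullet> e2))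
     - (\<Sum>p\<in>bpart per bc B2.
          ((posp (rho p) *\<^sub>R Xm1 p + negp (rho p) *\<^sub>R Xm p) \<bullet> e1) * (\<eta> p \<bullet> e1))"

definition Energy :: "bool \<Rightarrow> (real \<Rightarrow> bctype) \<Rightarrow> (real \<Rightarrow> real) \<Rightarrow> (real \<Rightarrow> real \<times> real) \<Rightarrow> real" where
  "Energy per bc rho X =
     2 * pi * L2ip (\<lambda>\<rho>. X \<rho> \<bullet> e1) (\<lambda>\<rho>. norm (dr X \<rho>))
   + 2 * pi * (\<Sum>p\<in>bpart per bc B1. rho p * (X p \<bullet> e1) * (X p \<bullet> e2))
   + pi * (\<Sum>p\<in>bpart per bc B2. rho p * (X p \<bullet> e1)\<^sup>2)"

definition AssumpA :: "bool \<Rightarrow> (real \<Rightarrow> bctype) \<Rightarrow> (real \<Rightarrow> real \<times> real) \<Rightarrow> bool" where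
  "AssumpA per bc X \<longleftrightarrow>
     (AE \<rho> in lebesgue_on {0..1}. 0 < norm (dr X \<rho>))
   \<and> (\<forall>\<rho>\<in>{0..1} - bpart per bc B0. 0 < X \<rho> \<bullet> e1)"

end

theory Submission
  imports Defs
begin

text \<open>Test the second equation with \<open>\<eta> = \<delta>X\<^sup>m\<^sup>+\<^sup>1\<close> and the first with \<open>\<Delta>t\<close> times the
  curvature: the curvature terms then become the dissipation \<open>2\<pi> \<Delta>t (X\<^sup>m\<cdot>e1 |\<kappa>|\<^sup>2, |X\<^sup>m\<^sub>\<rho>|)\<close>.
  The change of the area integral is bounded pointwise by \<open>|a| - |b| \<le> a\<cdot>(a - b) / |b|\<close> with
  \<open>a = X\<^sup>m\<^sup>+\<^sup>1\<^sub>\<rho>\<close>, \<open>b = X\<^sup>m\<^sub>\<rho>\<close>, weighted by \<open>X\<^sup>m\<cdot>e1 \<ge> 0\<close>. On \<open>\<partial>\<^sub>1I\<close> the boundary energy changes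
  exactly by the boundary term because \<open>\<delta>X\<cdot>e1 = 0\<close> there; on \<open>\<partial>\<^sub>2I\<close> treating the positive part
  of \<open>\<varrho>\<close> implicitly and the negative part explicitly makes the quadratic energy decrease,
  since \<open>r (a + d)\<^sup>2 - r a\<^sup>2 - 2 ([r]\<^sub>+ (a + d) + [r]\<^sub>- a) d = -|r| d\<^sup>2\<close>.\<close>

lemma norm_diff_le_inner_div_norm:
  fixes a b :: "'a::real_inner"
  assumes "b \<noteq> 0"
  shows "norm a - norm b \<le> (a \<bullet> (a - b)) / norm b"
proof -
  have "(norm a - norm b) * norm b \<le> norm a * norm a - norm a * norm b"
    using zero_le_power2[of "norm a - norm b"] by (simp add: power2_eq_square algebra_simps)
  also have "\<dots> \<le> a \<bullet> (a - b)"
    using norm_cauchy_schwarz[of a b] by (simp add: inner_diff_right dot_square_norm power2_eq_square)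
  finally show ?thesis using assms by (simp add: pos_le_divide_eq)
qed

lemma integral_nonneg_off_finite:
  fixes f :: "'a::euclidean_space \<Rightarrow> real"
  assumes "f integrable_on S" "finite N" "\<And>x. x \<in> S - N \<Longrightarrow> 0 \<le> f x"
  shows "0 \<le> integral S f"
proof -
  let ?g = "\<lambda>x. if x \<in> N then 0 else f x"
  have "(?g has_integral integral S f) S"
    using has_integral_spike_finite[OF assms(2) _ integrable_integral[OF assms(1)]] by simp
  then show ?thesis by (rule has_integral_nonneg) (use assms(3) in auto)
qed

lemma Lim_mult_left:
  fixes f :: "'a \<Rightarrow> real"
  assumes "F \<noteq> bot" "(f \<longlongrightarrow> l) F"
  shows "Lim F (\<lambda>x. c * f x) = c * Lim F f"
  using assms tendsto_Lim tendsto_mult_left by metis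

lemma AE_lebesgue_on_ex_in_interval:
  fixes a b :: real
  assumes "AE x in lebesgue_on S. P x" "S \<in> sets lebesgue" "{a<..<b} \<subseteq> S" "a < b"
  shows "\<exists>x\<in>{a<..<b}. P x"
proof (rule ccontr)
  assume "\<not> (\<exists>x\<in>{a<..<b}. P x)"
  obtain N where N: "{x \<in> space (lebesgue_on S). \<not> P x} \<subseteq> N" "N \<in> null_sets (lebesgue_on S)"
    using assms(1) unfolding eventually_ae_filter by blast
  then have "{a<..<b} \<subseteq> N" using \<open>\<not> _\<close> assms(3) by auto
  moreover have "negligible N"
    using N(2) assms(2) by (simp add: null_sets_restrict_space negligible_iff_null_sets)
  ultimately have "negligible (box a b)" by (simp add: negligible_subset box_real)
  then show False using assms(4) by (simp only: negligible_interval) auto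
qed

lemma posp_negp_quadratic_bound:
  fixes r a d :: real
  shows "r * (a + d)\<^sup>2 \<le> r * a\<^sup>2 + 2 * ((posp r * (a + d) + negp r * a) * d)"
proof (cases "0 \<le> r")
  case True
  then show ?thesis
    using mult_nonneg_nonneg[OF True zero_le_power2[of d]]
    by (simp add: posp_def negp_def power2_eq_square algebra_simps)
next
  case False
  then show ?thesis
    using mult_nonpos_nonneg[of r "d\<^sup>2"]
    by (simp add: posp_def negp_def power2_eq_square algebra_simps)
qed

abbreviation cell :: "nat \<Rightarrow> nat \<Rightarrow> real set" where
  "cell J j \<equiv> {node J (j - 1)..node J j}"

abbreviation open_cell :: "nat \<Rightarrow> nat \<Rightarrow> real set" where
  "open_cell J j \<equiv> {node J (j - 1)<..<node J j}"

lemma node_0 [simp]: "node J 0 = 0"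
  by (simp add: node_def)

lemma node_J [simp]: "0 < J \<Longrightarrow> node J J = 1"
  by (simp add: node_def)

lemma node_nonneg: "0 \<le> node J j"
  by (simp add: node_def)

lemma node_mono: "i \<le> j \<Longrightarrow> node J i \<le> node J j"
  by (simp add: node_def divide_right_mono)

lemma node_less: "0 < J \<Longrightarrow> i < j \<Longrightarrow> node J i < node J j"
  by (simp add: node_def divide_strict_right_mono)

lemma cell_subset_unit_interval: "0 < J \<Longrightarrow> j \<le> J \<Longrightarrow> cell J j \<subseteq> {0..1}"
  using node_nonneg[of J "j - 1"] node_mono[of j J J] by auto

lemma obtain_open_cell:
  assumes "0 < J" "\<rho> \<in> {0..1}" "\<rho> \<notin> node J ` {0..J}"
  obtains j where "j \<in> {1..J}" "\<rho> \<in> open_cell J j"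
proof -
  define k where "k = nat \<lfloor>\<rho> * J\<rfloor>"
  have k: "real k \<le> \<rho> * J" "\<rho> * J < real k + 1" and "\<rho> * J \<le> J"
    using assms(2) by (auto simp: k_def mult_left_le_one_le)
  then have "k \<le> J" by linarith
  then have "\<rho> \<noteq> node J k" using assms(3) by auto
  then have "real k < \<rho> * J" using k(1) assms(1) by (auto simp: node_def field_simps)
  moreover from this have "k < J" using \<open>\<rho> * J \<le> J\<close> by linarith
  ultimately show thesis
    using k(2) assms(1) by (intro that[of "Suc k"]) (auto simp: node_def field_simps)
qed

text \<open>Nodal values are unconstrained, so this also covers \<open>dr\<close> of functions in \<open>V\<^sup>h\<close>, whose
  value at a kink is junk.\<close>

definition cellwise_continuous :: "nat \<Rightarrow> (real \<Rightarrow> 'a::topological_space) \<Rightarrow> bool" where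
  "cellwise_continuous J f \<longleftrightarrow>
     (\<forall>j\<in>{1..J}. \<exists>g. continuous_on (cell J j) g \<and> (\<forall>\<rho>\<in>open_cell J j. f \<rho> = g \<rho>))"

lemma cellwise_continuous_compose2:
  assumes "cellwise_continuous J f" "cellwise_continuous J g"
    and "\<And>(S::real set) a b. continuous_on S a \<Longrightarrow> continuous_on S b \<Longrightarrow>
           continuous_on S (\<lambda>x. F (a x) (b x))"
  shows "cellwise_continuous J (\<lambda>\<rho>. F (f \<rho>) (g \<rho>))"
  unfolding cellwise_continuous_def
proof
  fix j assume "j \<in> {1..J}"
  then obtain a b where "continuous_on (cell J j) a" "\<forall>\<rho>\<in>open_cell J j. f \<rho> = a \<rho>"
    and "continuous_on (cell J j) b" "\<forall>\<rho>\<in>open_cell J j. g \<rho> = b \<rho>"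
    using assms(1,2) unfolding cellwise_continuous_def by meson
  then show "\<exists>h. continuous_on (cell J j) h \<and> (\<forall>\<rho>\<in>open_cell J j. F (f \<rho>) (g \<rho>) = h \<rho>)"
    using assms(3) by (intro exI[of _ "\<lambda>x. F (a x) (b x)"]) simp
qed

lemma cellwise_continuous_const: "cellwise_continuous J (\<lambda>_. c)"
  unfolding cellwise_continuous_def by (auto intro!: exI[of _ "\<lambda>_. c"])

lemma cellwise_continuous_add:
  "cellwise_continuous J f \<Longrightarrow> cellwise_continuous J g \<Longrightarrow>
     cellwise_continuous J (\<lambda>\<rho>. f \<rho> + g \<rho> :: 'a::topological_monoid_add)"
  by (rule cellwise_continuous_compose2[OF _ _ continuous_on_add])

lemma cellwise_continuous_mult:
  "cellwise_continuous J f \<Longrightarrow> cellwise_continuous J g \<Longrightarrow>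
     cellwise_continuous J (\<lambda>\<rho>. f \<rho> * g \<rho> :: 'a::real_normed_algebra)"
  by (rule cellwise_continuous_compose2[OF _ _ continuous_on_mult])

lemma cellwise_continuous_scaleR:
  "cellwise_continuous J f \<Longrightarrow> cellwise_continuous J g \<Longrightarrow>
     cellwise_continuous J (\<lambda>\<rho>. f \<rho> *\<^sub>R g \<rho> :: 'a::real_normed_vector)"
  by (rule cellwise_continuous_compose2[OF _ _ continuous_on_scaleR])

lemma cellwise_continuous_inner:
  "cellwise_continuous J f \<Longrightarrow> cellwise_continuous J g \<Longrightarrow>
     cellwise_continuous J (\<lambda>\<rho>. f \<rho> \<bullet> g \<rho> :: real)"
  by (rule cellwise_continuous_compose2[OF _ _ continuous_on_inner])

lemma cellwise_continuous_Pair: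
  "cellwise_continuous J f \<Longrightarrow> cellwise_continuous J g \<Longrightarrow>
     cellwise_continuous J (\<lambda>\<rho>. (f \<rho>, g \<rho>))"
  by (rule cellwise_continuous_compose2[OF _ _ continuous_on_Pair])

lemma cellwise_continuous_norm:
  "cellwise_continuous J f \<Longrightarrow> cellwise_continuous J (\<lambda>\<rho>. norm (f \<rho> :: 'a::real_normed_vector))"
  by (rule cellwise_continuous_compose2[OF _ _ continuous_on_norm, of _ f f]) simp_all

lemma cellwise_continuous_power:
  "cellwise_continuous J f \<Longrightarrow> cellwise_continuous J (\<lambda>\<rho>. f \<rho> ^ n :: 'a::real_normed_algebra_1)"
  by (rule cellwise_continuous_compose2[OF _ _ continuous_on_power, of _ f f]) simp_all

lemmas cellwise_continuous_intros =
  cellwise_continuous_const cellwise_continuous_add cellwise_continuous_mult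
  cellwise_continuous_scaleR cellwise_continuous_inner cellwise_continuous_norm
  cellwise_continuous_power

lemma Vh_cellwise_continuous:
  assumes "f \<in> Vh J per" "0 < J"
  shows "cellwise_continuous J f"
  using assms continuous_on_subset[OF _ cell_subset_unit_interval[OF assms(2)]]
  unfolding cellwise_continuous_def Vh_def by fastforce

lemma cellwise_continuous_one_sided_limits:
  assumes "cellwise_continuous J f" "0 < J" "j \<in> {1..J}"
  shows "\<exists>l. (f \<longlongrightarrow> l) (at_left (node J j))"
    and "\<exists>l. (f \<longlongrightarrow> l) (at_right (node J (j - 1)))"
proof -
  obtain g where g: "continuous_on (cell J j) g" "\<forall>\<rho>\<in>open_cell J j. f \<rho> = g \<rho>"
    using assms(1,3) unfolding cellwise_continuous_def by blast
  have lt: "node J (j - 1) < node J j" using assms(2,3) by (intro node_less) auto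
  have "eventually (\<lambda>x. g x = f x) (at_left (node J j))"
    using lt g(2) by (auto simp: eventually_at_left_field)
  with continuous_on_Icc_at_leftD[OF g(1) lt]
  show "\<exists>l. (f \<longlongrightarrow> l) (at_left (node J j))" by (blast intro: Lim_transform_eventually)
  have "eventually (\<lambda>x. g x = f x) (at_right (node J (j - 1)))"
    using lt g(2) by (auto simp: eventually_at_right_field)
  with continuous_on_Icc_at_rightD[OF g(1) lt]
  show "\<exists>l. (f \<longlongrightarrow> l) (at_right (node J (j - 1)))" by (blast intro: Lim_transform_eventually)
qed

lemma cellwise_continuous_integrable:
  fixes f :: "real \<Rightarrow> 'a::banach"
  assumes "cellwise_continuous J f" "0 < J"
  shows "f integrable_on {0..1}"
proof -
  have "f integrable_on {0..node J k}" if "k \<le> J" for k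
    using that
  proof (induction k)
    case 0
    show ?case using integrable_on_refl[of f 0] by simp
  next
    case (Suc k)
    then obtain g where g: "continuous_on (cell J (Suc k)) g" "\<forall>\<rho>\<in>open_cell J (Suc k). f \<rho> = g \<rho>"
      using assms(1) unfolding cellwise_continuous_def by fastforce
    have "f integrable_on cell J (Suc k)"
      by (rule integrable_spike_finite[of "{node J k, node J (Suc k)}" _ _ g])
        (use g integrable_continuous_interval in auto)
    with Suc show ?case
      using Henstock_Kurzweil_Integration.integrable_combine[OF node_nonneg node_mono[of k "Suc k"]] by simp
  qed
  from this[of J] show ?thesis using assms(2) by simp
qed

definition cellwise_affine :: "nat \<Rightarrow> (real \<Rightarrow> 'a::real_normed_vector) \<Rightarrow> bool" where
  "cellwise_affine J f \<longleftrightarrow>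
     (\<forall>j\<in>{1..J}. \<exists>b. \<forall>\<rho>\<in>open_cell J j. (f has_vector_derivative b) (at \<rho>))"

lemma Vh_cellwise_affine:
  assumes "f \<in> Vh J per"
  shows "cellwise_affine J f"
  unfolding cellwise_affine_def
proof
  fix j assume "j \<in> {1..J}"
  then obtain a b where ab: "\<forall>\<rho>\<in>cell J j. f \<rho> = a + \<rho> *\<^sub>R b"
    using assms unfolding Vh_def by blast
  have "(f has_vector_derivative b) (at \<rho>)" if "\<rho> \<in> open_cell J j" for \<rho>
    by (rule has_vector_derivative_transform_within_open[of "\<lambda>x. a + x *\<^sub>R b" _ _ "open_cell J j"])
      (use that ab in \<open>auto intro!: derivative_eq_intros\<close>)
  then show "\<exists>b. \<forall>\<rho>\<in>open_cell J j. (f has_vector_derivative b) (at \<rho>)" by blast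
qed

lemma cellwise_affine_add:
  "cellwise_affine J f \<Longrightarrow> cellwise_affine J g \<Longrightarrow> cellwise_affine J (\<lambda>\<rho>. f \<rho> + g \<rho>)"
  unfolding cellwise_affine_def by (metis has_vector_derivative_add)

lemma cellwise_affine_dr:
  assumes "cellwise_affine J f" "j \<in> {1..J}"
  obtains b where "\<forall>\<rho>\<in>open_cell J j. dr f \<rho> = b \<and> (f has_vector_derivative b) (at \<rho>)"
  using assms unfolding cellwise_affine_def by (metis dr_def vector_derivative_at)

lemma cellwise_continuous_comp_dr:
  assumes "cellwise_affine J f"
  shows "cellwise_continuous J (\<lambda>\<rho>. H (dr f \<rho>))"
  unfolding cellwise_continuous_def
proof
  fix j assume "j \<in> {1..J}"
  then obtain b where "\<forall>\<rho>\<in>open_cell J j. dr f \<rho> = b"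
    using cellwise_affine_dr[OF assms] by metis
  then show "\<exists>g. continuous_on (cell J j) g \<and> (\<forall>\<rho>\<in>open_cell J j. H (dr f \<rho>) = g \<rho>)"
    by (intro exI[of _ "\<lambda>_. H b"]) simp
qed

lemma sip_cong:
  assumes "\<And>\<rho>. f \<rho> \<bullet> g \<rho> = f' \<rho> \<bullet> g' \<rho>"
  shows "sip l J f g = sip l J f' g'"
  unfolding sip_def lumpip_def L2ip_def assms ..

text \<open>The continuity hypothesis is needed in the lumped variant: \<open>Lim\<close> of a function without
  one-sided limit is an unspecified value, so it does not scale.\<close>

lemma sip_cong_scaled:
  assumes "0 < J" "cellwise_continuous J (\<lambda>\<rho>. f \<rho> \<bullet> g \<rho>)"
    and "\<And>\<rho>. f' \<rho> \<bullet> g' \<rho> = c * (f \<rho> \<bullet> g \<rho>)"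
  shows "sip l J f' g' = c * sip l J f g"
proof -
  have "Lim (at_left (node J j)) (\<lambda>\<rho>. c * (f \<rho> \<bullet> g \<rho>)) = c * Lim (at_left (node J j)) (\<lambda>\<rho>. f \<rho> \<bullet> g \<rho>)"
    and "Lim (at_right (node J (j - 1))) (\<lambda>\<rho>. c * (f \<rho> \<bullet> g \<rho>))
       = c * Lim (at_right (node J (j - 1))) (\<lambda>\<rho>. f \<rho> \<bullet> g \<rho>)"
    if "j \<in> {1..J}" for j
    using cellwise_continuous_one_sided_limits[OF assms(2,1) that]
    by (auto intro: Lim_mult_left)
  then show ?thesis
    unfolding sip_def lumpip_def L2ip_def assms(3)
    by (simp add: sum_distrib_left distrib_left)
qed

lemma Vh_scaleR:
  assumes "f \<in> Vh J per"
  shows "(\<lambda>\<rho>. c *\<^sub>R f \<rho>) \<in> Vh J per"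
proof -
  have "\<exists>a' b'. \<forall>\<rho>\<in>cell J j. c *\<^sub>R f \<rho> = a' + \<rho> *\<^sub>R b'" if j: "j \<in> {1..J}" for j
  proof -
    obtain a b where "\<forall>\<rho>\<in>cell J j. f \<rho> = a + \<rho> *\<^sub>R b" using assms j unfolding Vh_def by blast
    then show ?thesis by (intro exI[of _ "c *\<^sub>R a"] exI[of _ "c *\<^sub>R b"]) (simp add: scaleR_add_right)
  qed
  then show ?thesis using assms by (auto simp: Vh_def intro!: continuous_intros)
qed

lemma Wsh_subset_Vh: "Wsh l J per bc \<subseteq> Vh J per"
  by (auto simp: Wsh_def Wh0_def)

lemma Wsh_mult: "k \<in> Wsh l J per bc \<Longrightarrow> (\<lambda>\<rho>. c * k \<rho>) \<in> Wsh l J per bc"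
  using Vh_scaleR[of k J per c] by (auto simp: Wsh_def Wh0_def)

lemma W2_scaleR: "k \<in> W2 (Wsh l J per bc) \<Longrightarrow> (\<lambda>\<rho>. c *\<^sub>R k \<rho>) \<in> W2 (Wsh l J per bc)"
  using Wsh_mult[of "\<lambda>\<rho>. fst (k \<rho>)" l J per bc c] Wsh_mult[of "\<lambda>\<rho>. snd (k \<rho>)" l J per bc c]
  by (auto simp: W2_def)

lemma W2_cellwise_continuous:
  assumes "k \<in> W2 (Wsh l J per bc)" "0 < J"
  shows "cellwise_continuous J k"
proof -
  have "(\<lambda>\<rho>. fst (k \<rho>)) \<in> Vh J per" "(\<lambda>\<rho>. snd (k \<rho>)) \<in> Vh J per"
    using assms(1) Wsh_subset_Vh unfolding W2_def by blast+
  then have "cellwise_continuous J (\<lambda>\<rho>. (fst (k \<rho>), snd (k \<rho>)))"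
    using assms(2) by (intro cellwise_continuous_Pair Vh_cellwise_continuous)
  then show ?thesis by simp
qed

lemma AssumpA_dr_nonzero:
  assumes "cellwise_affine J X" "AssumpA per bc X" "0 < J" "j \<in> {1..J}" "\<rho> \<in> open_cell J j"
  shows "dr X \<rho> \<noteq> 0"
proof -
  obtain b where b: "\<forall>\<rho>\<in>open_cell J j. dr X \<rho> = b"
    using cellwise_affine_dr[OF assms(1,4)] by metis
  have "open_cell J j \<subseteq> {0..1}" "node J (j - 1) < node J j"
    using cell_subset_unit_interval[OF assms(3), of j] assms(3,4) by (auto intro: node_less)
  then have "\<exists>x\<in>open_cell J j. 0 < norm (dr X x)"
    using assms(2) unfolding AssumpA_def by (intro AE_lebesgue_on_ex_in_interval[of _ "{0..1}"]) auto
  then show ?thesis using b assms(5) by auto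
qed

lemma AssumpA_e1_nonneg:
  assumes "X \<in> VVh0 J per bc" "AssumpA per bc X" "\<rho> \<in> {0..1}"
  shows "0 \<le> X \<rho> \<bullet> e1"
  using assms unfolding VVh0_def AssumpA_def by (cases "\<rho> \<in> bpart per bc B0") (auto intro: less_imp_le)

lemma area_integrand_nonneg:
  assumes J: "0 < J" and X: "X \<in> VVh0 J per bc" "AssumpA per bc X" and D: "D \<in> Vh J per"
    and X'_def: "X' = (\<lambda>\<rho>. X \<rho> + D \<rho>)" and \<rho>: "\<rho> \<in> {0..1} - node J ` {0..J}"
  shows "0 \<le> (D \<rho> \<bullet> e1) * norm (dr X' \<rho>)
    + ((X \<rho> \<bullet> e1) *\<^sub>R dr X' \<rho>) \<bullet> (inverse (norm (dr X \<rho>)) *\<^sub>R dr D \<rho>)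
    - (X' \<rho> \<bullet> e1) * norm (dr X' \<rho>) + (X \<rho> \<bullet> e1) * norm (dr X \<rho>)"
proof -
  have aff: "cellwise_affine J X" "cellwise_affine J D"
    using X(1) D Vh_cellwise_affine by (auto simp: VVh0_def)
  obtain j where j: "j \<in> {1..J}" "\<rho> \<in> open_cell J j"
    using obtain_open_cell[OF J] \<rho> by blast
  obtain a where a: "\<forall>\<rho>\<in>open_cell J j. dr X \<rho> = a \<and> (X has_vector_derivative a) (at \<rho>)"
    using cellwise_affine_dr[OF aff(1) j(1)] by blast
  obtain d where d: "\<forall>\<rho>\<in>open_cell J j. dr D \<rho> = d \<and> (D has_vector_derivative d) (at \<rho>)"
    using cellwise_affine_dr[OF aff(2) j(1)] by blast
  have "(X' has_vector_derivative a + d) (at \<rho>)"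
    unfolding X'_def using a d j(2) by (auto intro: has_vector_derivative_add)
  then have dr_X': "dr X' \<rho> = a + d" by (simp add: dr_def vector_derivative_at)
  have "a \<noteq> 0" using AssumpA_dr_nonzero[OF aff(1) X(2) J j] a j(2) by auto
  then have "norm (a + d) - norm a \<le> ((a + d) \<bullet> d) / norm a"
    using norm_diff_le_inner_div_norm[of a "a + d"] by simp
  moreover have "0 \<le> X \<rho> \<bullet> e1" using AssumpA_e1_nonneg[OF X] \<rho> by blast
  ultimately have "0 \<le> (X \<rho> \<bullet> e1) * (((a + d) \<bullet> d) / norm a - norm (a + d) + norm a)"
    by simp
  also have "\<dots> = (D \<rho> \<bullet> e1) * norm (dr X' \<rho>)
    + ((X \<rho> \<bullet> e1) *\<^sub>R dr X' \<rho>) \<bullet> (inverse (norm (dr X \<rho>)) *\<^sub>R dr D \<rho>)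
    - (X' \<rho> \<bullet> e1) * norm (dr X' \<rho>) + (X \<rho> \<bullet> e1) * norm (dr X \<rho>)"
    using a d j(2) unfolding dr_X' by (simp add: X'_def inner_add_left algebra_simps divide_inverse)
  finally show ?thesis .
qed

lemma L2ip_area_increment_le:
  assumes J: "0 < J" and X: "X \<in> VVh0 J per bc" "AssumpA per bc X" and D: "D \<in> Vh J per"
    and X'_def: "X' = (\<lambda>\<rho>. X \<rho> + D \<rho>)"
  shows "L2ip (\<lambda>\<rho>. X' \<rho> \<bullet> e1) (\<lambda>\<rho>. norm (dr X' \<rho>)) - L2ip (\<lambda>\<rho>. X \<rho> \<bullet> e1) (\<lambda>\<rho>. norm (dr X \<rho>))
    \<le> L2ip (\<lambda>\<rho>. D \<rho> \<bullet> e1) (\<lambda>\<rho>. norm (dr X' \<rho>))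
     + L2ip (\<lambda>\<rho>. (X \<rho> \<bullet> e1) *\<^sub>R dr X' \<rho>) (\<lambda>\<rho>. inverse (norm (dr X \<rho>)) *\<^sub>R dr D \<rho>)"
proof -
  define u1 where "u1 \<rho> = (D \<rho> \<bullet> e1) \<bullet> norm (dr X' \<rho>)" for \<rho>
  define u2 where "u2 \<rho> = ((X \<rho> \<bullet> e1) *\<^sub>R dr X' \<rho>) \<bullet> (inverse (norm (dr X \<rho>)) *\<^sub>R dr D \<rho>)" for \<rho>
  define u3 where "u3 \<rho> = (X' \<rho> \<bullet> e1) \<bullet> norm (dr X' \<rho>)" for \<rho>
  define u4 where "u4 \<rho> = (X \<rho> \<bullet> e1) \<bullet> norm (dr X \<rho>)" for \<rho>
  have XV: "X \<in> Vh J per" using X(1) by (simp add: VVh0_def)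
  have aff: "cellwise_affine J X" "cellwise_affine J D" "cellwise_affine J X'"
    using Vh_cellwise_affine[OF XV] Vh_cellwise_affine[OF D] unfolding X'_def
    by (auto intro: cellwise_affine_add)
  have cont: "cellwise_continuous J X" "cellwise_continuous J D" "cellwise_continuous J X'"
    using Vh_cellwise_continuous[OF XV J] Vh_cellwise_continuous[OF D J] unfolding X'_def
    by (auto intro: cellwise_continuous_add)
  have int: "u1 integrable_on {0..1}" "u2 integrable_on {0..1}" "u3 integrable_on {0..1}"
      "u4 integrable_on {0..1}"
    unfolding u1_def u2_def u3_def u4_def
    by (intro cellwise_continuous_integrable[OF _ J] cellwise_continuous_intros cont
          cellwise_continuous_comp_dr aff)+
  then have integral_eq: "integral {0..1} (\<lambda>\<rho>. u1 \<rho> + u2 \<rho> - u3 \<rho> + u4 \<rho>)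
      = integral {0..1} u1 + integral {0..1} u2 - integral {0..1} u3 + integral {0..1} u4"
    by (simp add: integral_add integral_diff integrable_add integrable_diff)
  have "0 \<le> integral {0..1} (\<lambda>\<rho>. u1 \<rho> + u2 \<rho> - u3 \<rho> + u4 \<rho>)"
    using int area_integrand_nonneg[OF J X D X'_def] unfolding u1_def u2_def u3_def u4_def
    by (intro integral_nonneg_off_finite[of _ _ "node J ` {0..J}"] integrable_add integrable_diff) auto
  then show ?thesis
    unfolding integral_eq unfolding L2ip_def u1_def u2_def u3_def u4_def by linarith
qed

lemma boundary_energy_increment_le:
  assumes "dX \<in> VVhd J per bc" and Xm1_def: "Xm1 = (\<lambda>\<rho>. Xm \<rho> + dX \<rho>)"
  shows "2 * (\<Sum>p\<in>bpart per bc B1. rho p * (Xm1 p \<bullet> e1) * (Xm1 p \<bullet> e2))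
       + (\<Sum>p\<in>bpart per bc B2. rho p * (Xm1 p \<bullet> e1)\<^sup>2) + 2 * Bm per bc rho Xm Xm1 dX
     \<le> 2 * (\<Sum>p\<in>bpart per bc B1. rho p * (Xm p \<bullet> e1) * (Xm p \<bullet> e2))
       + (\<Sum>p\<in>bpart per bc B2. rho p * (Xm p \<bullet> e1)\<^sup>2)"
proof -
  have "\<forall>p\<in>bpart per bc B1. dX p \<bullet> e1 = 0" using assms(1) by (simp add: VVhd_def)
  then have "(\<Sum>p\<in>bpart per bc B1. rho p * (Xm1 p \<bullet> e1) * (Xm1 p \<bullet> e2))
     = (\<Sum>p\<in>bpart per bc B1. rho p * (Xm p \<bullet> e1) * (Xm p \<bullet> e2) + rho p * (Xm p \<bullet> e1) * (dX p \<bullet> e2))"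
    unfolding Xm1_def by (intro sum.cong) (auto simp: inner_add_left algebra_simps)
  moreover have "(\<Sum>p\<in>bpart per bc B2. rho p * (Xm1 p \<bullet> e1)\<^sup>2)
     \<le> (\<Sum>p\<in>bpart per bc B2. rho p * (Xm p \<bullet> e1)\<^sup>2
          + 2 * (((posp (rho p) *\<^sub>R Xm1 p + negp (rho p) *\<^sub>R Xm p) \<bullet> e1) * (dX p \<bullet> e1)))"
    unfolding Xm1_def by (intro sum_mono) (use posp_negp_quadratic_bound in \<open>simp add: inner_add_left\<close>)
  ultimately show ?thesis
    unfolding Bm_def by (simp add: sum.distrib sum_distrib_left)
qed

lemma energy_step_le:
  assumes "0 < J" "Xm \<in> VVh0 J per bc" "AssumpA per bc Xm" "dX \<in> VVhd J per bc"
    and "Xm1 = (\<lambda>\<rho>. Xm \<rho> + dX \<rho>)"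
    and "T + L2ip (\<lambda>\<rho>. dX \<rho> \<bullet> e1) (\<lambda>\<rho>. norm (dr Xm1 \<rho>))
      + L2ip (\<lambda>\<rho>. (Xm \<rho> \<bullet> e1) *\<^sub>R dr Xm1 \<rho>) (\<lambda>\<rho>. inverse (norm (dr Xm \<rho>)) *\<^sub>R dr dX \<rho>)
    = Bm per bc rho Xm Xm1 dX"
  shows "Energy per bc rho Xm1 + 2 * pi * T \<le> Energy per bc rho Xm"
proof -
  have "dX \<in> Vh J per" using assms(4) by (simp add: VVhd_def VVh0_def)
  note area = L2ip_area_increment_le[OF assms(1-3) this assms(5)]
  note boundary = boundary_energy_increment_le[OF assms(4,5), of rho]
  show ?thesis
    using mult_left_mono[OF area, of "2 * pi"] mult_left_mono[OF boundary, of pi]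
      arg_cong[OF assms(6), of "(*) (2 * pi)"]
    unfolding Energy_def by (simp add: algebra_simps)
qed

lemma energy_stable_scalar_curvature:
  assumes J: "0 < J" and X: "Xm \<in> VVh0 J per bc" "AssumpA per bc Xm" and dt: "0 < dt"
    and dX: "dX \<in> VVhd J per bc" and \<kappa>: "\<kappa> \<in> Wsh lumped J per bc"
    and Xm1: "Xm1 = (\<lambda>\<rho>. Xm \<rho> + dX \<rho>)"
    and normal_eq: "\<forall>ch\<in>Wsh lumped J per bc.
         sip lumped J (\<lambda>\<rho>. (Xm \<rho> \<bullet> e1) *\<^sub>R ((1 / dt) *\<^sub>R (Xm1 \<rho> - Xm \<rho>)))
                      (\<lambda>\<rho>. (ch \<rho> * norm (dr Xm \<rho>)) *\<^sub>R nu Xm \<rho>)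
       = sip lumped J (\<lambda>\<rho>. (Xm \<rho> \<bullet> e1) * \<kappa> \<rho>) (\<lambda>\<rho>. ch \<rho> * norm (dr Xm \<rho>))"
    and tangent_eq: "\<forall>\<eta>\<in>VVhd J per bc.
         sip lumped J (\<lambda>\<rho>. ((Xm \<rho> \<bullet> e1) * \<kappa> \<rho>) *\<^sub>R nu Xm \<rho>) (\<lambda>\<rho>. norm (dr Xm \<rho>) *\<^sub>R \<eta> \<rho>)
       + L2ip (\<lambda>\<rho>. \<eta> \<rho> \<bullet> e1) (\<lambda>\<rho>. norm (dr Xm1 \<rho>))
       + L2ip (\<lambda>\<rho>. (Xm \<rho> \<bullet> e1) *\<^sub>R dr Xm1 \<rho>) (\<lambda>\<rho>. inverse (norm (dr Xm \<rho>)) *\<^sub>R dr \<eta> \<rho>)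
       = Bm per bc rho Xm Xm1 \<eta>"
  shows "Energy per bc rho Xm1
           + 2 * pi * dt * sip lumped J (\<lambda>\<rho>. (Xm \<rho> \<bullet> e1) * (\<kappa> \<rho>)\<^sup>2) (\<lambda>\<rho>. norm (dr Xm \<rho>))
         \<le> Energy per bc rho Xm"
proof -
  have XV: "Xm \<in> Vh J per" using X(1) by (simp add: VVh0_def)
  have "sip lumped J (\<lambda>\<rho>. ((Xm \<rho> \<bullet> e1) * \<kappa> \<rho>) *\<^sub>R nu Xm \<rho>) (\<lambda>\<rho>. norm (dr Xm \<rho>) *\<^sub>R dX \<rho>)
      = sip lumped J (\<lambda>\<rho>. (Xm \<rho> \<bullet> e1) *\<^sub>R ((1 / dt) *\<^sub>R (Xm1 \<rho> - Xm \<rho>)))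
                     (\<lambda>\<rho>. (dt * \<kappa> \<rho> * norm (dr Xm \<rho>)) *\<^sub>R nu Xm \<rho>)"
    (is "?T = _")
    using dt by (intro sip_cong) (simp add: Xm1 inner_commute)
  also have "\<dots> = sip lumped J (\<lambda>\<rho>. (Xm \<rho> \<bullet> e1) * \<kappa> \<rho>) (\<lambda>\<rho>. dt * \<kappa> \<rho> * norm (dr Xm \<rho>))"
    using normal_eq Wsh_mult[OF \<kappa>, of dt] by auto
  also have "\<dots> = dt * sip lumped J (\<lambda>\<rho>. (Xm \<rho> \<bullet> e1) * (\<kappa> \<rho>)\<^sup>2) (\<lambda>\<rho>. norm (dr Xm \<rho>))"
    using Vh_cellwise_continuous[OF XV J] Vh_cellwise_continuous[OF subsetD[OF Wsh_subset_Vh \<kappa>] J]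
    by (intro sip_cong_scaled[OF J] cellwise_continuous_intros cellwise_continuous_comp_dr
        Vh_cellwise_affine[OF XV]) (simp_all add: power2_eq_square)
  finally have curvature_term: "?T = dt * sip lumped J (\<lambda>\<rho>. (Xm \<rho> \<bullet> e1) * (\<kappa> \<rho>)\<^sup>2) (\<lambda>\<rho>. norm (dr Xm \<rho>))" .
  have "Energy per bc rho Xm1 + 2 * pi * ?T \<le> Energy per bc rho Xm"
    by (rule energy_step_le[OF J X dX Xm1]) (use tangent_eq dX in blast)
  then show ?thesis unfolding curvature_term by (simp add: mult.assoc)
qed

lemma energy_stable_vector_curvature:
  assumes J: "0 < J" and X: "Xm \<in> VVh0 J per bc" "AssumpA per bc Xm" and dt: "0 < dt"
    and dX: "dX \<in> VVhd J per bc" and \<kappa>: "\<kappa> \<in> W2 (Wsh lumped J per bc)"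
    and Xm1: "Xm1 = (\<lambda>\<rho>. Xm \<rho> + dX \<rho>)"
    and curvature_eq: "\<forall>ch\<in>W2 (Wsh lumped J per bc).
         sip lumped J (\<lambda>\<rho>. (Xm \<rho> \<bullet> e1) *\<^sub>R ((1 / dt) *\<^sub>R (Xm1 \<rho> - Xm \<rho>)))
                      (\<lambda>\<rho>. norm (dr Xm \<rho>) *\<^sub>R ch \<rho>)
       = sip lumped J (\<lambda>\<rho>. (Xm \<rho> \<bullet> e1) *\<^sub>R \<kappa> \<rho>) (\<lambda>\<rho>. norm (dr Xm \<rho>) *\<^sub>R ch \<rho>)"
    and tangent_eq: "\<forall>\<eta>\<in>VVhd J per bc.
         sip lumped J (\<lambda>\<rho>. (Xm \<rho> \<bullet> e1) *\<^sub>R \<kappa> \<rho>) (\<lambda>\<rho>. norm (dr Xm \<rho>) *\<^sub>R \<eta> \<rho>)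
       + L2ip (\<lambda>\<rho>. \<eta> \<rho> \<bullet> e1) (\<lambda>\<rho>. norm (dr Xm1 \<rho>))
       + L2ip (\<lambda>\<rho>. (Xm \<rho> \<bullet> e1) *\<^sub>R dr Xm1 \<rho>) (\<lambda>\<rho>. inverse (norm (dr Xm \<rho>)) *\<^sub>R dr \<eta> \<rho>)
       = Bm per bc rho Xm Xm1 \<eta>"
  shows "Energy per bc rho Xm1
           + 2 * pi * dt * sip lumped J (\<lambda>\<rho>. (Xm \<rho> \<bullet> e1) * (norm (\<kappa> \<rho>))\<^sup>2) (\<lambda>\<rho>. norm (dr Xm \<rho>))
         \<le> Energy per bc rho Xm"
proof -
  have XV: "Xm \<in> Vh J per" using X(1) by (simp add: VVh0_def)
  have "sip lumped J (\<lambda>\<rho>. (Xm \<rho> \<bullet> e1) *\<^sub>R \<kappa> \<rho>) (\<lambda>\<rho>. norm (dr Xm \<rho>) *\<^sub>R dX \<rho>)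
      = sip lumped J (\<lambda>\<rho>. (Xm \<rho> \<bullet> e1) *\<^sub>R ((1 / dt) *\<^sub>R (Xm1 \<rho> - Xm \<rho>)))
                     (\<lambda>\<rho>. norm (dr Xm \<rho>) *\<^sub>R (dt *\<^sub>R \<kappa> \<rho>))"
    (is "?T = _")
    using dt by (intro sip_cong) (simp add: Xm1 inner_commute)
  also have "\<dots> = sip lumped J (\<lambda>\<rho>. (Xm \<rho> \<bullet> e1) *\<^sub>R \<kappa> \<rho>) (\<lambda>\<rho>. norm (dr Xm \<rho>) *\<^sub>R (dt *\<^sub>R \<kappa> \<rho>))"
    using curvature_eq W2_scaleR[OF \<kappa>, of dt] by auto
  also have "\<dots> = dt * sip lumped J (\<lambda>\<rho>. (Xm \<rho> \<bullet> e1) * (norm (\<kappa> \<rho>))\<^sup>2) (\<lambda>\<rho>. norm (dr Xm \<rho>))"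
    using Vh_cellwise_continuous[OF XV J] W2_cellwise_continuous[OF \<kappa> J]
    by (intro sip_cong_scaled[OF J] cellwise_continuous_intros cellwise_continuous_comp_dr
        Vh_cellwise_affine[OF XV]) (simp_all add: power2_norm_eq_inner)
  finally have curvature_term:
    "?T = dt * sip lumped J (\<lambda>\<rho>. (Xm \<rho> \<bullet> e1) * (norm (\<kappa> \<rho>))\<^sup>2) (\<lambda>\<rho>. norm (dr Xm \<rho>))" .
  have "Energy per bc rho Xm1 + 2 * pi * ?T \<le> Energy per bc rho Xm"
    by (rule energy_step_le[OF J X dX Xm1]) (use tangent_eq dX in blast)
  then show ?thesis unfolding curvature_term by (simp add: mult.assoc)
qed

theorem theorem4p6:
  fixes J :: nat and per lumped :: bool and bc :: "real \<Rightarrow> bctype"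
    and rho :: "real \<Rightarrow> real" and Xm :: "real \<Rightarrow> real \<times> real" and dt :: real
  assumes "3 \<le> J"
    and "\<forall>p\<in>{0, 1}. \<bar>rho p\<bar> \<le> 1"
    and "Xm \<in> VVh0 J per bc"
    and "AssumpA per bc Xm"
    and "0 < dt"
  shows
   "(\<forall>(dX :: real \<Rightarrow> real \<times> real) (\<kappa> :: real \<Rightarrow> real) Xm1.
      dX \<in> VVhd J per bc \<longrightarrow> \<kappa> \<in> Wsh lumped J per bc \<longrightarrow> Xm1 = (\<lambda>\<rho>. Xm \<rho> + dX \<rho>) \<longrightarrow>
      (\<forall>ch\<in>Wsh lumped J per bc.
         sip lumped J (\<lambda>\<rho>. (Xm \<rho> \<bullet> e1) *\<^sub>R ((1 / dt) *\<^sub>R (Xm1 \<rho> - Xm \<rho>)))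
                      (\<lambda>\<rho>. (ch \<rho> * norm (dr Xm \<rho>)) *\<^sub>R nu Xm \<rho>)
       = sip lumped J (\<lambda>\<rho>. (Xm \<rho> \<bullet> e1) * \<kappa> \<rho>) (\<lambda>\<rho>. ch \<rho> * norm (dr Xm \<rho>))) \<longrightarrow>
      (\<forall>\<eta>\<in>VVhd J per bc.
         sip lumped J (\<lambda>\<rho>. ((Xm \<rho> \<bullet> e1) * \<kappa> \<rho>) *\<^sub>R nu Xm \<rho>) (\<lambda>\<rho>. norm (dr Xm \<rho>) *\<^sub>R \<eta> \<rho>)
       + L2ip (\<lambda>\<rho>. \<eta> \<rho> \<bullet> e1) (\<lambda>\<rho>. norm (dr Xm1 \<rho>))
       + L2ip (\<lambda>\<rho>. (Xm \<rho> \<bullet> e1) *\<^sub>R dr Xm1 \<rho>) (\<lambda>\<rho>. inverse (norm (dr Xm \<rho>)) *\<^sub>R dr \<eta> \<rho>)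
       = Bm per bc rho Xm Xm1 \<eta>) \<longrightarrow>
      Energy per bc rho Xm1
        + 2 * pi * dt * sip lumped J (\<lambda>\<rho>. (Xm \<rho> \<bullet> e1) * (\<kappa> \<rho>)\<^sup>2) (\<lambda>\<rho>. norm (dr Xm \<rho>))
      \<le> Energy per bc rho Xm)
  \<and> (\<forall>(dX :: real \<Rightarrow> real \<times> real) (\<kappa> :: real \<Rightarrow> real \<times> real) Xm1.
      dX \<in> VVhd J per bc \<longrightarrow> \<kappa> \<in> W2 (Wsh lumped J per bc) \<longrightarrow> Xm1 = (\<lambda>\<rho>. Xm \<rho> + dX \<rho>) \<longrightarrow>
      (\<forall>ch\<in>W2 (Wsh lumped J per bc).
         sip lumped J (\<lambda>\<rho>. (Xm \<rho> \<bullet> e1) *\<^sub>R ((1 / dt) *\<^sub>R (Xm1 \<rho> - Xm \<rho>)))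
                      (\<lambda>\<rho>. norm (dr Xm \<rho>) *\<^sub>R ch \<rho>)
       = sip lumped J (\<lambda>\<rho>. (Xm \<rho> \<bullet> e1) *\<^sub>R \<kappa> \<rho>) (\<lambda>\<rho>. norm (dr Xm \<rho>) *\<^sub>R ch \<rho>)) \<longrightarrow>
      (\<forall>\<eta>\<in>VVhd J per bc.
         sip lumped J (\<lambda>\<rho>. (Xm \<rho> \<bullet> e1) *\<^sub>R \<kappa> \<rho>) (\<lambda>\<rho>. norm (dr Xm \<rho>) *\<^sub>R \<eta> \<rho>)
       + L2ip (\<lambda>\<rho>. \<eta> \<rho> \<bullet> e1) (\<lambda>\<rho>. norm (dr Xm1 \<rho>))
       + L2ip (\<lambda>\<rho>. (Xm \<rho> \<bullet> e1) *\<^sub>R dr Xm1 \<rho>) (\<lambda>\<rho>. inverse (norm (dr Xm \<rho>)) *\<^sub>R dr \<eta> \<rho>)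
       = Bm per bc rho Xm Xm1 \<eta>) \<longrightarrow>
      Energy per bc rho Xm1
        + 2 * pi * dt * sip lumped J (\<lambda>\<rho>. (Xm \<rho> \<bullet> e1) * (norm (\<kappa> \<rho>))\<^sup>2) (\<lambda>\<rho>. norm (dr Xm \<rho>))
      \<le> Energy per bc rho Xm)"
proof -
  have J: "0 < J" using assms(1) by simp
  show ?thesis
    using energy_stable_scalar_curvature[OF J assms(3-5)] energy_stable_vector_curvature[OF J assms(3-5)]
    by blast
qed

end
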